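(* Let $X$ be a Tychonoff space with $|X|>1$ and $I\in\mathbb{A}(X)$. Then $I$ is a leaf vertex of $\mathbb{AG}(X)$ if and only if $X\setminus\overline{\mathcal{O}(I)}$ is a singleton.
   Context: $C(X)$ denotes the ring of all real-valued continuous functions on $X$; $\mathrm{Coz}(f)=\{x: f(x)\neq 0\}$; for $S\subseteq C(X)$, $\mathcal{O}(S)=\bigcup_{f\in S}\mathrm{Coz}(f)$. $\mathbb{A}(X)$ is the set of nonzero ideals $I$ of $C(X)$ for which there is a nonzero ideal $J$ with $IJ=\{0\}$; $\mathbb{AG}(X)$ has vertex set $\mathbb{A}(X)$, distinct $I,J$ adjacent iff $IJ=\{0\}$. A leaf vertex is a vertex adjacent to exactly one vertex. Overline denotes closure. *)

theory Defs
  imports "HOL-Analysis.Analysis"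
begin

text \<open>C(X): continuous real functions on X, represented extensionally (value 0 off the space).\<close>
definition CX :: "'a topology \<Rightarrow> ('a \<Rightarrow> real) set" where
  "CX X = {f. continuous_map X euclideanreal f \<and> (\<forall>x. x \<notin> topspace X \<longrightarrow> f x = 0)}"

definition tychonoff_space :: "'a topology \<Rightarrow> bool" where
  "tychonoff_space X \<longleftrightarrow> completely_regular_space X \<and> t1_space X"

definition is_ideal :: "'a topology \<Rightarrow> ('a \<Rightarrow> real) set \<Rightarrow> bool" where
  "is_ideal X I \<longleftrightarrow> I \<subseteq> CX X \<and> (\<lambda>x. 0) \<in> I \<and>
     (\<forall>f\<in>I. \<forall>g\<in>I. (\<lambda>x. f x + g x) \<in> I \<and> (\<lambda>x. - f x) \<in> I) \<and>
     (\<forall>h\<in>CX X. \<forall>f\<in>I. (\<lambda>x. h x * f x) \<in> I)"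

definition ideal_prod :: "'a topology \<Rightarrow> ('a \<Rightarrow> real) set \<Rightarrow> ('a \<Rightarrow> real) set \<Rightarrow> ('a \<Rightarrow> real) set" where
  "ideal_prod X I J = \<Inter>{K. is_ideal X K \<and> (\<forall>f\<in>I. \<forall>g\<in>J. (\<lambda>x. f x * g x) \<in> K)}"

definition zero_ideal :: "('a \<Rightarrow> real) set" where
  "zero_ideal = {(\<lambda>x. 0)}"

definition annih_ideals :: "'a topology \<Rightarrow> ('a \<Rightarrow> real) set set" where
  "annih_ideals X = {I. is_ideal X I \<and> I \<noteq> zero_ideal \<and>
      (\<exists>J. is_ideal X J \<and> J \<noteq> zero_ideal \<and> ideal_prod X I J = zero_ideal)}"

definition AG_adj :: "'a topology \<Rightarrow> ('a \<Rightarrow> real) set \<Rightarrow> ('a \<Rightarrow> real) set \<Rightarrow> bool" where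
  "AG_adj X I J \<longleftrightarrow> I \<in> annih_ideals X \<and> J \<in> annih_ideals X \<and> I \<noteq> J \<and>
      ideal_prod X I J = zero_ideal"

definition leaf_vertex :: "'a topology \<Rightarrow> ('a \<Rightarrow> real) set \<Rightarrow> bool" where
  "leaf_vertex X I \<longleftrightarrow> I \<in> annih_ideals X \<and> (\<exists>!J. AG_adj X I J)"

definition coz :: "'a topology \<Rightarrow> ('a \<Rightarrow> real) \<Rightarrow> 'a set" where
  "coz X f = {x \<in> topspace X. f x \<noteq> 0}"

definition coz_union :: "'a topology \<Rightarrow> ('a \<Rightarrow> real) set \<Rightarrow> 'a set" where
  "coz_union X S = (\<Union>f\<in>S. coz X f)"

end

theory Submission
  imports Defs
begin

text \<open>Writing \<open>W = X \ cl O(I)\<close>, a nonzero ideal \<open>J\<close> annihilates \<open>I\<close> exactly when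
  \<open>O(J) \<subseteq> W\<close>; so the neighbours of \<open>I\<close> are the nonzero ideals with cozero sets inside the
  open set \<open>W\<close>. If \<open>W\<close> contains two points \<open>p \<noteq> q\<close>, the ideals of functions with cozero set in
  \<open>W\<close> and in \<open>W - {q}\<close> are two different neighbours (a bump function at \<open>q\<close> lies in one but not the other). If
  \<open>W = {p}\<close>, then \<open>p\<close> is isolated and every neighbour consists of the functions supported
  on \<open>{p}\<close>, so the neighbour is unique.\<close>

definition coz_ideal :: "'a topology \<Rightarrow> 'a set \<Rightarrow> ('a \<Rightarrow> real) set" where
  "coz_ideal X S = {g \<in> CX X. coz X g \<subseteq> S}"

lemma CX_zero_outside: "f \<in> CX X \<Longrightarrow> x \<notin> topspace X \<Longrightarrow> f x = 0"
  by (simp add: CX_def)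

lemma continuous_map_CX: "f \<in> CX X \<Longrightarrow> continuous_map X euclideanreal f"
  by (simp add: CX_def)

lemma is_ideal_zero_ideal: "is_ideal X zero_ideal"
  by (auto simp: is_ideal_def zero_ideal_def CX_def)

lemma openin_coz: "f \<in> CX X \<Longrightarrow> openin X (coz X f)"
  using openin_continuous_map_preimage[OF continuous_map_CX, of f X "- {0}"]
  by (simp add: coz_def open_Compl)

lemma openin_coz_union: "is_ideal X I \<Longrightarrow> openin X (coz_union X I)"
  unfolding coz_union_def by (intro openin_Union) (auto simp: is_ideal_def intro: openin_coz)

lemma coz_union_subset_topspace: "coz_union X I \<subseteq> topspace X"
  by (auto simp: coz_union_def coz_def)

lemma coz_union_eq_empty_iff:
  assumes "is_ideal X I"
  shows "coz_union X I = {} \<longleftrightarrow> I = zero_ideal"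
proof
  assume empty: "coz_union X I = {}"
  have "f = (\<lambda>x. 0)" if "f \<in> I" for f
  proof
    fix x
    have "f \<in> CX X" using that assms by (auto simp: is_ideal_def)
    then show "f x = 0"
      using empty that CX_zero_outside[of f X x] by (auto simp: coz_union_def coz_def)
  qed
  moreover have "(\<lambda>x. 0) \<in> I" using assms by (simp add: is_ideal_def)
  ultimately show "I = zero_ideal" unfolding zero_ideal_def by blast
qed (auto simp: coz_union_def zero_ideal_def coz_def)

lemma ideal_prod_eq_zero_iff:
  assumes "is_ideal X I" "is_ideal X J"
  shows "ideal_prod X I J = zero_ideal \<longleftrightarrow> (\<forall>f\<in>I. \<forall>g\<in>J. \<forall>x. f x * g x = 0)"
proof
  assume "ideal_prod X I J = zero_ideal"
  moreover have "(\<lambda>x. f x * g x) \<in> ideal_prod X I J" if "f \<in> I" "g \<in> J" for f g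
    using that by (auto simp: ideal_prod_def)
  ultimately show "\<forall>f\<in>I. \<forall>g\<in>J. \<forall>x. f x * g x = 0"
    by (auto simp: zero_ideal_def fun_eq_iff)
next
  assume "\<forall>f\<in>I. \<forall>g\<in>J. \<forall>x. f x * g x = 0"
  then have "zero_ideal \<in> {K. is_ideal X K \<and> (\<forall>f\<in>I. \<forall>g\<in>J. (\<lambda>x. f x * g x) \<in> K)}"
    using is_ideal_zero_ideal[of X] by (auto simp: zero_ideal_def)
  then have "ideal_prod X I J \<subseteq> zero_ideal"
    unfolding ideal_prod_def by blast
  moreover have "(\<lambda>x. 0) \<in> ideal_prod X I J"
    unfolding ideal_prod_def is_ideal_def by blast
  ultimately show "ideal_prod X I J = zero_ideal" by (auto simp: zero_ideal_def)
qed

lemma ideal_prod_eq_zero_commute: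
  assumes "is_ideal X I" "is_ideal X J"
  shows "ideal_prod X I J = zero_ideal \<longleftrightarrow> ideal_prod X J I = zero_ideal"
  using assms by (auto simp: ideal_prod_eq_zero_iff mult.commute)

lemma products_vanish_iff_coz_union_disjoint:
  assumes "I \<subseteq> CX X" "J \<subseteq> CX X"
  shows "(\<forall>f\<in>I. \<forall>g\<in>J. \<forall>x. f x * g x = 0) \<longleftrightarrow> coz_union X J \<inter> coz_union X I = {}"
proof
  assume "\<forall>f\<in>I. \<forall>g\<in>J. \<forall>x. f x * g x = 0"
  then show "coz_union X J \<inter> coz_union X I = {}" by (auto simp: coz_union_def coz_def)
next
  assume disjoint: "coz_union X J \<inter> coz_union X I = {}"
  show "\<forall>f\<in>I. \<forall>g\<in>J. \<forall>x. f x * g x = 0"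
  proof (intro ballI allI)
    fix f g x assume f: "f \<in> I" and g: "g \<in> J"
    show "f x * g x = 0"
    proof (cases "x \<in> topspace X")
      case True
      show ?thesis
      proof (rule ccontr)
        assume "f x * g x \<noteq> 0"
        then have "x \<in> coz X f" "x \<in> coz X g" using True by (auto simp: coz_def)
        then show False using disjoint f g unfolding coz_union_def by blast
      qed
    qed (use f assms(1) CX_zero_outside[of f X x] in auto)
  qed
qed

text \<open>Since \<open>O(J)\<close> is open, it misses \<open>O(I)\<close> iff it misses the closure of \<open>O(I)\<close>.\<close>

lemma ideal_prod_eq_zero_iff_coz_union:
  assumes "is_ideal X I" "is_ideal X J"
  shows "ideal_prod X I J = zero_ideal \<longleftrightarrow>
           coz_union X J \<subseteq> topspace X - X closure_of (coz_union X I)"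
proof -
  have CX: "I \<subseteq> CX X" "J \<subseteq> CX X" using assms by (auto simp: is_ideal_def)
  have "ideal_prod X I J = zero_ideal \<longleftrightarrow> coz_union X J \<inter> coz_union X I = {}"
    unfolding ideal_prod_eq_zero_iff[OF assms] by (rule products_vanish_iff_coz_union_disjoint[OF CX])
  also have "\<dots> \<longleftrightarrow> coz_union X J \<inter> X closure_of (coz_union X I) = {}"
    by (simp add: openin_Int_closure_of_eq_empty openin_coz_union assms(2))
  finally show ?thesis using coz_union_subset_topspace[of X J] by blast
qed

lemma AG_adj_iff_coz_union:
  assumes "I \<in> annih_ideals X"
  shows "AG_adj X I J \<longleftrightarrow> is_ideal X J \<and> J \<noteq> zero_ideal \<and>
           coz_union X J \<subseteq> topspace X - X closure_of (coz_union X I)"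
proof
  assume "is_ideal X J \<and> J \<noteq> zero_ideal \<and>
            coz_union X J \<subseteq> topspace X - X closure_of (coz_union X I)"
  then have J: "is_ideal X J" "J \<noteq> zero_ideal"
    and W: "coz_union X J \<subseteq> topspace X - X closure_of (coz_union X I)" by auto
  have I: "is_ideal X I" "I \<noteq> zero_ideal" using assms by (auto simp: annih_ideals_def)
  have IJ: "ideal_prod X I J = zero_ideal" and JI: "ideal_prod X J I = zero_ideal"
    using W ideal_prod_eq_zero_iff_coz_union[OF I(1) J(1)] ideal_prod_eq_zero_commute[OF I(1) J(1)]
    by auto
  have "coz_union X I \<noteq> {}" using I coz_union_eq_empty_iff by blast
  then have "I \<noteq> J"
    using W closure_of_subset[OF coz_union_subset_topspace, of X I] by blast
  moreover have "J \<in> annih_ideals X" using J I JI by (auto simp: annih_ideals_def)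
  ultimately show "AG_adj X I J" using assms IJ by (simp add: AG_adj_def)
next
  assume "AG_adj X I J"
  then have "is_ideal X I" "is_ideal X J" "J \<noteq> zero_ideal" "ideal_prod X I J = zero_ideal"
    by (auto simp: AG_adj_def annih_ideals_def)
  then show "is_ideal X J \<and> J \<noteq> zero_ideal \<and>
               coz_union X J \<subseteq> topspace X - X closure_of (coz_union X I)"
    using ideal_prod_eq_zero_iff_coz_union by blast
qed

lemma is_ideal_coz_ideal: "is_ideal X (coz_ideal X S)"
proof -
  have "x \<in> S" if "coz X f \<subseteq> S" "coz X g \<subseteq> S" "x \<in> topspace X" "f x + g x \<noteq> 0"
    for f g :: "'a \<Rightarrow> real" and x
    using that by (cases "f x = 0") (auto simp: coz_def)
  then show ?thesis
    unfolding is_ideal_def coz_ideal_def CX_def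
    by (auto intro: continuous_map_real_mult continuous_intros simp: coz_def)
qed

lemma coz_union_coz_ideal_subset: "coz_union X (coz_ideal X S) \<subseteq> S"
  by (auto simp: coz_union_def coz_ideal_def)

lemma completely_regular_bump_function:
  assumes "completely_regular_space X" "openin X S" "p \<in> S"
  obtains g where "g \<in> coz_ideal X S" "g p = 1"
proof -
  have S: "S \<subseteq> topspace X" using assms(2) by (simp add: openin_subset)
  have "closedin X (topspace X - S)" "p \<in> topspace X - (topspace X - S)"
    using assms(2,3) S by auto
  then obtain f :: "'a \<Rightarrow> real" where f: "continuous_map X (top_of_set {0..1}) f" "f p = 0"
      "f ` (topspace X - S) \<subseteq> {1}"
    using assms(1) unfolding completely_regular_space_def by blast
  define g where "g x = (if x \<in> topspace X then 1 - f x else 0)" for x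
  have "continuous_map X euclideanreal (\<lambda>x. 1 - f x)"
    using f(1) by (simp add: continuous_map_in_subtopology continuous_map_diff)
  then have "continuous_map X euclideanreal g"
    by (rule continuous_map_eq) (simp add: g_def)
  then have "g \<in> coz_ideal X S"
    using f(3) by (auto simp: coz_ideal_def CX_def coz_def g_def)
  moreover have "g p = 1" using f(2) S assms(3) by (auto simp: g_def)
  ultimately show thesis using that by blast
qed

lemma coz_ideal_neq_zero_ideal:
  assumes "completely_regular_space X" "openin X S" "p \<in> S"
  shows "coz_ideal X S \<noteq> zero_ideal"
  using completely_regular_bump_function[OF assms] by (force simp: zero_ideal_def)

lemma coz_ideal_Diff_singleton_neq:
  assumes "completely_regular_space X" "openin X S" "q \<in> S"
  shows "coz_ideal X (S - {q}) \<noteq> coz_ideal X S"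
proof -
  obtain g where g: "g \<in> coz_ideal X S" "g q = 1"
    using completely_regular_bump_function[OF assms] .
  have "q \<in> coz X g" using g assms openin_subset by (fastforce simp: coz_def)
  then have "g \<notin> coz_ideal X (S - {q})" by (auto simp: coz_ideal_def)
  then show ?thesis using g(1) by blast
qed

text \<open>Every \<open>g\<close> supported at \<open>p\<close> equals \<open>(g p / f p) \<cdot> f\<close> for any \<open>f \<in> J\<close> with \<open>f p \<noteq> 0\<close>.\<close>

lemma coz_ideal_singleton_unique:
  assumes J: "is_ideal X J" "J \<noteq> zero_ideal" and sub: "coz_union X J \<subseteq> {p}"
  shows "J = coz_ideal X {p}"
proof
  show "J \<subseteq> coz_ideal X {p}"
    using J(1) sub by (auto simp: coz_ideal_def is_ideal_def coz_union_def)
  obtain f where f: "f \<in> J" "p \<in> coz X f"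
    using J sub coz_union_eq_empty_iff[OF J(1)] by (auto simp: coz_union_def)
  show "coz_ideal X {p} \<subseteq> J"
  proof
    fix g assume g: "g \<in> coz_ideal X {p}"
    define h where "h x = g x * inverse (f p)" for x
    have "g \<in> CX X" using g by (simp add: coz_ideal_def)
    then have "h \<in> CX X"
      unfolding CX_def h_def by (auto intro: continuous_map_real_mult_right continuous_map_CX)
    then have "(\<lambda>x. h x * f x) \<in> J" using J(1) f(1) by (simp add: is_ideal_def)
    moreover have "h x * f x = g x" for x
    proof (cases "x = p")
      case False
      then have "g x = 0"
        using g CX_zero_outside[of g X x] by (cases "x \<in> topspace X") (auto simp: coz_ideal_def coz_def)
      then show ?thesis by (simp add: h_def)
    qed (use f(2) in \<open>simp add: h_def coz_def field_simps\<close>)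
    then have "(\<lambda>x. h x * f x) = g" by blast
    ultimately show "g \<in> J" by simp
  qed
qed

lemma AG_adj_coz_ideal:
  assumes "completely_regular_space X" "I \<in> annih_ideals X" "openin X S"
    and "S \<subseteq> topspace X - X closure_of (coz_union X I)" "p \<in> S"
  shows "AG_adj X I (coz_ideal X S)"
  using coz_union_coz_ideal_subset[of X S] assms(4) is_ideal_coz_ideal[of X S]
    coz_ideal_neq_zero_ideal[OF assms(1,3,5)]
  unfolding AG_adj_iff_coz_union[OF assms(2)] by auto

lemma leaf_vertex_imp_complement_closure_singleton:
  assumes "completely_regular_space X" "t1_space X" "leaf_vertex X I"
  shows "\<exists>p. topspace X - X closure_of (coz_union X I) = {p}"
proof -
  define W where "W = topspace X - X closure_of (coz_union X I)"
  have W_open: "openin X W" by (simp add: W_def openin_diff)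
  have I: "I \<in> annih_ideals X" and "\<exists>!J. AG_adj X I J"
    using assms(3) by (simp_all add: leaf_vertex_def)
  then obtain J where J: "AG_adj X I J" and unique: "\<And>K. AG_adj X I K \<Longrightarrow> K = J"
    by (elim ex1E) blast
  from J have "is_ideal X J" "J \<noteq> zero_ideal" "coz_union X J \<subseteq> W"
    by (simp_all add: AG_adj_iff_coz_union[OF I] W_def)
  then obtain p where "p \<in> W" using coz_union_eq_empty_iff by blast
  moreover have "q = p" if "q \<in> W" for q
  proof (rule ccontr)
    assume "q \<noteq> p"
    have "openin X (W - {q})" using assms(2) W_open that by (simp add: t1_space_openin_delete)
    then have "AG_adj X I (coz_ideal X (W - {q}))"
      by (rule AG_adj_coz_ideal[OF assms(1) I]) (use \<open>p \<in> W\<close> \<open>q \<noteq> p\<close> W_def in auto)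
    moreover have "AG_adj X I (coz_ideal X W)"
      using AG_adj_coz_ideal[OF assms(1) I W_open _ that] by (simp add: W_def)
    ultimately have "coz_ideal X (W - {q}) = coz_ideal X W" using unique by blast
    then show False using coz_ideal_Diff_singleton_neq[OF assms(1) W_open that] by blast
  qed
  ultimately show ?thesis unfolding W_def by blast
qed

lemma complement_closure_singleton_imp_leaf_vertex:
  assumes "completely_regular_space X" "I \<in> annih_ideals X"
    and W: "topspace X - X closure_of (coz_union X I) = {p}"
  shows "leaf_vertex X I"
proof -
  have "openin X {p}" unfolding W[symmetric] by (simp add: openin_diff)
  then have "AG_adj X I (coz_ideal X {p})"
    using AG_adj_coz_ideal[OF assms(1,2)] W by auto
  moreover have "J = coz_ideal X {p}" if "AG_adj X I J" for J
  proof (rule coz_ideal_singleton_unique)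
    show "is_ideal X J" "J \<noteq> zero_ideal" "coz_union X J \<subseteq> {p}"
      using that W by (simp_all add: AG_adj_iff_coz_union[OF assms(2)])
  qed
  ultimately show ?thesis using assms(2) by (auto simp: leaf_vertex_def)
qed

theorem mainTheorem13:
  fixes X :: "'a topology" and I :: "('a \<Rightarrow> real) set"
  assumes "tychonoff_space X"
    and "\<exists>x\<in>topspace X. \<exists>y\<in>topspace X. x \<noteq> y"
    and "I \<in> annih_ideals X"
  shows "leaf_vertex X I \<longleftrightarrow> (\<exists>p. topspace X - X closure_of (coz_union X I) = {p})"
proof -
  have "completely_regular_space X" "t1_space X"
    using assms(1) by (simp_all add: tychonoff_space_def)
  then show ?thesis
    using leaf_vertex_imp_complement_closure_singleton
      complement_closure_singleton_imp_leaf_vertex[OF _ assms(3)] by blast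
qed

end
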